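(* Let $F(\lambda,\mu)=\left(\frac{2\lambda^2}{4-\mu^2},\ \mu+\frac{\mu\lambda^2}{4-\mu^2}\right)$, $\phi(\lambda,\mu)=\frac{4-\lambda^2+\mu^2}{4\mu}$, $\psi(\lambda,\mu)=\frac{4-\mu^2+\lambda^2}{4\lambda}$. Fix $\eta\in\mathbb{C}$ with $\eta^2\neq1$, a square root $s$ of $\eta^2-1$, and let $H_\eta=\{(\lambda,\mu):4-\lambda^2+\mu^2=4\eta\mu\}$. Define $\varphi_\eta\colon H_\eta\dashrightarrow\mathbb{P}^1$ by $$\varphi_\eta(\lambda,\mu)=\frac{2-\lambda-\eta\mu-s\mu}{-2+\lambda+\eta\mu-s\mu}.$$ Then $\varphi_\eta$ is birational from $H_\eta$ to $\mathbb{P}^1$, $F$ maps $H_\eta$ into itself, and for generic $p\in H_\eta$: $$\varphi_\eta(F(p))=\varphi_\eta(p)^2,\qquad \psi(p)=\tfrac12\left(\varphi_\eta(p)+\varphi_\eta(p)^{-1}\right).$$ *)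

theory Defs
  imports Complex_Main "HOL-Computational_Algebra.Polynomial"
begin

definition F_map :: "complex \<times> complex \<Rightarrow> complex \<times> complex" where
  "F_map p = (case p of (l, m) \<Rightarrow>
     (2 * l^2 / (4 - m^2), m + m * l^2 / (4 - m^2)))"

text \<open>F is defined where its denominator does not vanish.\<close>
definition F_den :: "complex \<times> complex \<Rightarrow> complex" where
  "F_den p = (case p of (l, m) \<Rightarrow> 4 - m^2)"

definition psi_fun :: "complex \<times> complex \<Rightarrow> complex" where
  "psi_fun p = (case p of (l, m) \<Rightarrow> (4 - m^2 + l^2) / (4 * l))"

definition H_curve :: "complex \<Rightarrow> (complex \<times> complex) set" where
  "H_curve \<eta> = {(l, m). 4 - l^2 + m^2 = 4 * \<eta> * m}"

text \<open>The map varphi_eta, with values in the affine chart of P^1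
  (its value is infinity exactly where the denominator vanishes).\<close>
definition varphi_num :: "complex \<Rightarrow> complex \<Rightarrow> complex \<times> complex \<Rightarrow> complex" where
  "varphi_num \<eta> s p = (case p of (l, m) \<Rightarrow> 2 - l - \<eta> * m - s * m)"

definition varphi_den :: "complex \<Rightarrow> complex \<Rightarrow> complex \<times> complex \<Rightarrow> complex" where
  "varphi_den \<eta> s p = (case p of (l, m) \<Rightarrow> -2 + l + \<eta> * m - s * m)"

definition varphi :: "complex \<Rightarrow> complex \<Rightarrow> complex \<times> complex \<Rightarrow> complex" where
  "varphi \<eta> s p = varphi_num \<eta> s p / varphi_den \<eta> s p"

text \<open>A property holds for generic points of a set (curve) S: it fails only on a
  finite subset (for an irreducible curve, a proper Zariski-closed subset).\<close>
definition generic_on :: "'a set \<Rightarrow> ('a \<Rightarrow> bool) \<Rightarrow> bool" where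
  "generic_on S P \<longleftrightarrow> finite {x \<in> S. \<not> P x}"

definition rational_fun :: "(complex \<Rightarrow> complex) \<Rightarrow> bool" where
  "rational_fun f \<longleftrightarrow> (\<exists>P Q :: complex poly. Q \<noteq> 0 \<and> (\<forall>t. f t = poly P t / poly Q t))"

definition varphi_birational :: "complex \<Rightarrow> complex \<Rightarrow> bool" where
  "varphi_birational \<eta> s \<longleftrightarrow>
     (\<exists>g1 g2. rational_fun g1 \<and> rational_fun g2 \<and>
        generic_on (H_curve \<eta>)
          (\<lambda>p. varphi_den \<eta> s p \<noteq> 0 \<and> (g1 (varphi \<eta> s p), g2 (varphi \<eta> s p)) = p) \<and>
        generic_on UNIV
          (\<lambda>t. (g1 t, g2 t) \<in> H_curve \<eta> \<and> varphi_den \<eta> s (g1 t, g2 t) \<noteq> 0 \<and>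
               varphi \<eta> s (g1 t, g2 t) = t))"

end

theory Submission
  imports Defs
begin

text \<open>The conic \<open>H\<^sub>\<eta>\<close> passes through \<open>(2, 0)\<close>, and both the numerator and the denominator of
  \<open>\<phi>\<^sub>\<eta>\<close> are lines through that point, so \<open>\<phi>\<^sub>\<eta>\<close> is a Moebius transform of the projection of
  \<open>H\<^sub>\<eta>\<close> from \<open>(2, 0)\<close>; it is therefore birational, with an explicit rational inverse.
  All the claimed identities become, after clearing denominators, polynomial identities in the
  ideal generated by the equation of \<open>H\<^sub>\<eta>\<close> and \<open>s\<^sup>2 = \<eta>\<^sup>2 - 1\<close>, which the \<open>algebra\<close> method
  decides. The points where a denominator vanishes are finite in number, since every fibre of a
  coordinate projection of the conic has at most two points.\<close>

lemma generic_onI: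
  assumes "finite E" and "\<And>x. x \<in> S \<Longrightarrow> x \<notin> E \<Longrightarrow> P x"
  shows "generic_on S P"
  unfolding generic_on_def using assms(2) by (auto intro: finite_subset[OF _ assms(1)])

lemma generic_on_mono:
  assumes "generic_on S P" and "\<And>x. x \<in> S \<Longrightarrow> P x \<Longrightarrow> Q x"
  shows "generic_on S Q"
  using assms(1) unfolding generic_on_def by (rule finite_subset[rotated]) (use assms(2) in auto)

lemma rational_fun_poly_divide: "Q \<noteq> 0 \<Longrightarrow> rational_fun (\<lambda>t. poly P t / poly Q t)"
  unfolding rational_fun_def by blast

lemma mem_H_curve: "(l, m) \<in> H_curve \<eta> \<longleftrightarrow> 4 - l^2 + m^2 = 4 * \<eta> * m"
  by (simp add: H_curve_def)

lemma H_curve_divide_iff: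
  fixes A B D :: complex
  assumes "D \<noteq> 0"
  shows "(A / D, B / D) \<in> H_curve \<eta> \<longleftrightarrow> 4 * D^2 - A^2 + B^2 = 4 * \<eta> * B * D"
proof -
  have "4 - (A / D)^2 + (B / D)^2 = (4 * D^2 - A^2 + B^2) / D^2"
    and "4 * \<eta> * (B / D) = (4 * \<eta> * B * D) / D^2"
    using assms by (simp_all add: field_simps power2_eq_square)
  then show ?thesis
    using assms by (simp add: mem_H_curve)
qed

lemma finite_H_curve_fst: "finite {p \<in> H_curve \<eta>. fst p = c}"
proof (rule finite_subset)
  show "{p \<in> H_curve \<eta>. fst p = c} \<subseteq> (\<lambda>z. (c, z + 2 * \<eta>)) ` {z. z^2 = c^2 - 4 + 4 * \<eta>^2}"
  proof
    fix p assume "p \<in> {p \<in> H_curve \<eta>. fst p = c}"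
    then obtain m where p: "p = (c, m)" and h: "4 - c^2 + m^2 = 4 * \<eta> * m"
      by (cases p) (auto simp: mem_H_curve)
    have "(m - 2 * \<eta>)^2 = c^2 - 4 + 4 * \<eta>^2"
      using h by (simp add: power2_eq_square algebra_simps)
    then show "p \<in> (\<lambda>z. (c, z + 2 * \<eta>)) ` {z. z^2 = c^2 - 4 + 4 * \<eta>^2}"
      using p by (intro image_eqI[of _ _ "m - 2 * \<eta>"]) auto
  qed
qed (simp add: finite_nth_roots)

lemma finite_H_curve_snd: "finite {p \<in> H_curve \<eta>. snd p = c}"
proof (rule finite_subset)
  show "{p \<in> H_curve \<eta>. snd p = c} \<subseteq> (\<lambda>l. (l, c)) ` {l. l^2 = 4 + c^2 - 4 * \<eta> * c}"
  proof
    fix p assume "p \<in> {p \<in> H_curve \<eta>. snd p = c}"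
    then obtain l where "p = (l, c)" and "4 - l^2 + c^2 = 4 * \<eta> * c"
      by (cases p) (auto simp: mem_H_curve)
    then show "p \<in> (\<lambda>l. (l, c)) ` {l. l^2 = 4 + c^2 - 4 * \<eta> * c}"
      by (auto simp: algebra_simps)
  qed
qed (simp add: finite_nth_roots)

lemma generic_on_H_curve_avoiding:
  assumes "finite S"
  shows "generic_on (H_curve \<eta>) (\<lambda>(l, m). l \<noteq> 0 \<and> m \<notin> S)"
proof (rule generic_onI)
  show "finite ({p \<in> H_curve \<eta>. fst p = 0} \<union> (\<Union>c\<in>S. {p \<in> H_curve \<eta>. snd p = c}))"
    using assms finite_H_curve_fst finite_H_curve_snd by blast
qed (auto split: prod.splits)

lemma F_map_pair:
  assumes "4 - m^2 \<noteq> 0"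
  shows "F_map (l, m) = (2 * l^2 / (4 - m^2), m * (4 - m^2 + l^2) / (4 - m^2))"
  using assms by (simp add: F_map_def field_simps)

lemma F_map_in_H_curve:
  assumes "p \<in> H_curve \<eta>" and "F_den p \<noteq> 0"
  shows "F_map p \<in> H_curve \<eta>"
proof -
  obtain l m where p: "p = (l, m)" and h: "4 - l^2 + m^2 = 4 * \<eta> * m" and D: "4 - m^2 \<noteq> 0"
    using assms by (cases p) (auto simp: mem_H_curve F_den_def)
  have "4 * (4 - m^2)^2 - (2 * l^2)^2 + (m * (4 - m^2 + l^2))^2
      = 4 * \<eta> * (m * (4 - m^2 + l^2)) * (4 - m^2)"
    using h by algebra
  then show ?thesis
    using D by (simp add: p F_map_pair H_curve_divide_iff)
qed

lemma varphi_num_pair: "varphi_num \<eta> s (l, m) = 2 - l - (\<eta> + s) * m"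
  by (simp add: varphi_num_def algebra_simps)

lemma varphi_den_pair: "varphi_den \<eta> s (l, m) = -2 + l + (\<eta> - s) * m"
  by (simp add: varphi_den_def algebra_simps)

lemma varphi_divide:
  fixes A B D :: complex
  assumes "D \<noteq> 0"
  shows "varphi \<eta> s (A / D, B / D) = (2 * D - A - (\<eta> + s) * B) / (-2 * D + A + (\<eta> - s) * B)"
    and "varphi_den \<eta> s (A / D, B / D) = (-2 * D + A + (\<eta> - s) * B) / D"
proof -
  have "varphi_num \<eta> s (A / D, B / D) = (2 * D - A - (\<eta> + s) * B) / D"
    using assms by (simp add: varphi_num_pair field_simps)
  moreover show "varphi_den \<eta> s (A / D, B / D) = (-2 * D + A + (\<eta> - s) * B) / D"
    using assms by (simp add: varphi_den_pair field_simps)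
  ultimately show "varphi \<eta> s (A / D, B / D) = (2 * D - A - (\<eta> + s) * B) / (-2 * D + A + (\<eta> - s) * B)"
    using assms by (simp add: varphi_def)
qed

lemma varphi_num_add_den: "varphi_num \<eta> s (l, m) + varphi_den \<eta> s (l, m) = -2 * s * m"
  by (simp add: varphi_num_pair varphi_den_pair algebra_simps)

lemma varphi_num_mult_den:
  assumes "(l, m) \<in> H_curve \<eta>" and "s^2 = \<eta>^2 - 1"
  shows "varphi_num \<eta> s (l, m) * varphi_den \<eta> s (l, m)
    = l * (varphi_num \<eta> s (l, m) - varphi_den \<eta> s (l, m))"
  using assms unfolding mem_H_curve varphi_num_pair varphi_den_pair by algebra

lemma varphi_num_den_sq:
  assumes "(l, m) \<in> H_curve \<eta>" and "s^2 = \<eta>^2 - 1"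
  shows "(\<eta> + s) * varphi_den \<eta> s (l, m)^2 - (\<eta> - s) * varphi_num \<eta> s (l, m)^2
    = 4 * s * (varphi_num \<eta> s (l, m) - varphi_den \<eta> s (l, m))"
  using assms unfolding mem_H_curve varphi_num_pair varphi_den_pair by algebra

lemma varphi_den_nonzero:
  assumes "(l, m) \<in> H_curve \<eta>" and "s^2 = \<eta>^2 - 1"
    and "s \<noteq> 0" "m \<noteq> 0" "(\<eta> - s) * m \<noteq> 2"
  shows "varphi_den \<eta> s (l, m) \<noteq> 0"
proof
  assume "varphi_den \<eta> s (l, m) = 0"
  then have "m * (2 * s * ((\<eta> - s) * m - 2)) = 0"
    using assms(1,2) unfolding mem_H_curve varphi_den_pair by algebra
  then show False
    using assms(3-) by simp
qed

lemma varphi_num_nonzero: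
  assumes "(l, m) \<in> H_curve \<eta>" and "s^2 = \<eta>^2 - 1"
    and "s \<noteq> 0" "m \<noteq> 0" "(\<eta> + s) * m \<noteq> 2"
  shows "varphi_num \<eta> s (l, m) \<noteq> 0"
proof
  assume "varphi_num \<eta> s (l, m) = 0"
  then have "m * (2 * s * ((\<eta> + s) * m - 2)) = 0"
    using assms(1,2) unfolding mem_H_curve varphi_num_pair by algebra
  then show False
    using assms(3-) by simp
qed

lemma varphi_num_ne_den:
  assumes "(l, m) \<in> H_curve \<eta>" and "\<eta>^2 \<noteq> 1" "m \<noteq> 0"
  shows "varphi_num \<eta> s (l, m) \<noteq> varphi_den \<eta> s (l, m)"
proof
  assume "varphi_num \<eta> s (l, m) = varphi_den \<eta> s (l, m)"
  then have "(1 - \<eta>^2) * m^2 = 0"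
    using assms(1) unfolding mem_H_curve varphi_num_pair varphi_den_pair by algebra
  then show False
    using assms(2,3) by simp
qed

lemma varphi_F_map:
  assumes H: "(l, m) \<in> H_curve \<eta>" and s_sq: "s^2 = \<eta>^2 - 1"
    and "s \<noteq> 0" "m \<noteq> 0" and D: "4 - m^2 \<noteq> 0" and Y0: "varphi_den \<eta> s (l, m) \<noteq> 0"
  shows "varphi \<eta> s (F_map (l, m)) = varphi \<eta> s (l, m)^2"
proof -
  define X Y where "X = varphi_num \<eta> s (l, m)" and "Y = varphi_den \<eta> s (l, m)"
  define X' Y' where
    "X' = 2 * (4 - m^2) - 2 * l^2 - (\<eta> + s) * (m * (4 - m^2 + l^2))" and
    "Y' = -2 * (4 - m^2) + 2 * l^2 + (\<eta> - s) * (m * (4 - m^2 + l^2))"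
  have F: "varphi \<eta> s (F_map (l, m)) = X' / Y'"
    unfolding F_map_pair[OF D] varphi_divide(1)[OF D] X'_def Y'_def ..
  have key: "X' * Y^2 = Y' * X^2"
    using H s_sq unfolding X_def Y_def X'_def Y'_def mem_H_curve varphi_num_pair varphi_den_pair
    by algebra
  have "Y' \<noteq> 0"
  proof
    assume "Y' = 0"
    then have "X' = 0"
      using key Y0 by (simp add: Y_def)
    have "X' + Y' = -2 * s * m * (4 - m^2 + l^2)"
      unfolding X'_def Y'_def by (simp add: algebra_simps)
    with \<open>X' = 0\<close> \<open>Y' = 0\<close> assms have "4 - m^2 + l^2 = 0"
      by simp
    moreover have "X' = 4 * (4 - m^2) - (2 + (\<eta> + s) * m) * (4 - m^2 + l^2)"
      unfolding X'_def by (simp add: algebra_simps)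
    ultimately have "4 * (4 - m^2) = 0"
      using \<open>X' = 0\<close> by simp
    with D show False
      by simp
  qed
  with key Y0 have "X' / Y' = (X / Y)^2"
    by (simp add: power_divide frac_eq_eq flip: Y_def)
  then show ?thesis
    unfolding F by (simp add: varphi_def X_def Y_def)
qed

lemma psi_fun_eq:
  assumes "(l, m) \<in> H_curve \<eta>" and "s^2 = \<eta>^2 - 1"
    and "l \<noteq> 0" "varphi_num \<eta> s (l, m) \<noteq> 0" "varphi_den \<eta> s (l, m) \<noteq> 0"
  shows "psi_fun (l, m) = (1/2) * (varphi \<eta> s (l, m) + inverse (varphi \<eta> s (l, m)))"
proof -
  define X Y where "X = varphi_num \<eta> s (l, m)" and "Y = varphi_den \<eta> s (l, m)"
  have "(4 - m^2 + l^2) * 2 * (X * Y) = 4 * l * (X^2 + Y^2)"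
    using assms(1,2) unfolding X_def Y_def mem_H_curve varphi_num_pair varphi_den_pair by algebra
  then show ?thesis
    using assms(3-) by (simp add: psi_fun_def varphi_def field_simps power2_eq_square flip: X_def Y_def)
qed

definition varphi_inv :: "complex \<Rightarrow> complex \<Rightarrow> complex \<Rightarrow> complex \<times> complex" where
  "varphi_inv \<eta> s t =
     (4 * s * t / ((\<eta> + s) - (\<eta> - s) * t^2), 2 * (1 - t^2) / ((\<eta> + s) - (\<eta> - s) * t^2))"

lemma rational_fun_varphi_inv:
  assumes "\<eta> + s \<noteq> 0"
  shows "rational_fun (\<lambda>t. fst (varphi_inv \<eta> s t))" and "rational_fun (\<lambda>t. snd (varphi_inv \<eta> s t))"
proof -
  define Q where "Q = [:\<eta> + s, 0, -(\<eta> - s):]"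
  have Q: "Q \<noteq> 0" and poly_Q: "\<And>t. poly Q t = (\<eta> + s) - (\<eta> - s) * t^2"
    using assms by (simp_all add: Q_def algebra_simps power2_eq_square)
  have "(\<lambda>t. fst (varphi_inv \<eta> s t)) = (\<lambda>t. poly [:0, 4 * s:] t / poly Q t)"
    and "(\<lambda>t. snd (varphi_inv \<eta> s t)) = (\<lambda>t. poly [:2, 0, -2:] t / poly Q t)"
    by (simp_all add: varphi_inv_def poly_Q algebra_simps power2_eq_square)
  then show "rational_fun (\<lambda>t. fst (varphi_inv \<eta> s t))" and "rational_fun (\<lambda>t. snd (varphi_inv \<eta> s t))"
    using rational_fun_poly_divide[OF Q] by (simp_all only:)
qed

lemma varphi_inv_divide:
  fixes X Y :: complex
  assumes "Y \<noteq> 0"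
  shows "varphi_inv \<eta> s (X / Y) =
    (4 * s * X * Y / ((\<eta> + s) * Y^2 - (\<eta> - s) * X^2),
     2 * (Y^2 - X^2) / ((\<eta> + s) * Y^2 - (\<eta> - s) * X^2))"
proof -
  have "(\<eta> + s) - (\<eta> - s) * (X / Y)^2 = ((\<eta> + s) * Y^2 - (\<eta> - s) * X^2) / Y^2"
    and "1 - (X / Y)^2 = (Y^2 - X^2) / Y^2"
    using assms by (simp_all add: field_simps)
  then show ?thesis
    using assms by (simp add: varphi_inv_def power2_eq_square)
qed

lemma varphi_inv_varphi:
  assumes H: "(l, m) \<in> H_curve \<eta>" and s_sq: "s^2 = \<eta>^2 - 1"
    and "\<eta>^2 \<noteq> 1" "s \<noteq> 0" "m \<noteq> 0" and Y0: "varphi_den \<eta> s (l, m) \<noteq> 0"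
  shows "varphi_inv \<eta> s (varphi \<eta> s (l, m)) = (l, m)"
proof -
  define X Y where "X = varphi_num \<eta> s (l, m)" and "Y = varphi_den \<eta> s (l, m)"
  have K: "(\<eta> + s) * Y^2 - (\<eta> - s) * X^2 = 4 * s * (X - Y)"
    unfolding X_def Y_def by (rule varphi_num_den_sq[OF H s_sq])
  have K0: "4 * s * (X - Y) \<noteq> 0"
    using varphi_num_ne_den[OF H] assms(3-5) by (simp add: X_def Y_def)
  have "4 * s * X * Y = l * (4 * s * (X - Y))"
    using varphi_num_mult_den[OF H s_sq] by (simp add: X_def Y_def)
  moreover have "2 * (Y^2 - X^2) = m * (4 * s * (X - Y))"
  proof -
    have "X + Y = -2 * s * m"
      unfolding X_def Y_def by (rule varphi_num_add_den)
    then show ?thesis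
      by algebra
  qed
  ultimately show ?thesis
    using Y0 K0 by (simp add: varphi_def varphi_inv_divide K flip: X_def Y_def)
qed

lemma varphi_varphi_inv:
  assumes s_sq: "s^2 = \<eta>^2 - 1" and "s \<noteq> 0" "t \<noteq> 1" and Q: "(\<eta> + s) - (\<eta> - s) * t^2 \<noteq> 0"
  shows "varphi_inv \<eta> s t \<in> H_curve \<eta>"
    and "varphi_den \<eta> s (varphi_inv \<eta> s t) \<noteq> 0"
    and "varphi \<eta> s (varphi_inv \<eta> s t) = t"
proof -
  define Q where "Q = (\<eta> + s) - (\<eta> - s) * t^2"
  have Q0: "Q \<noteq> 0"
    using Q by (simp add: Q_def)
  have inv: "varphi_inv \<eta> s t = (4 * s * t / Q, 2 * (1 - t^2) / Q)"
    by (simp add: varphi_inv_def Q_def)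
  have "4 * Q^2 - (4 * s * t)^2 + (2 * (1 - t^2))^2 = 4 * \<eta> * (2 * (1 - t^2)) * Q"
    unfolding Q_def using s_sq by algebra
  then show "varphi_inv \<eta> s t \<in> H_curve \<eta>"
    using Q0 by (simp add: inv H_curve_divide_iff)
  have num: "2 * Q - 4 * s * t - (\<eta> + s) * (2 * (1 - t^2)) = 4 * s * t * (t - 1)"
    and den: "-2 * Q + 4 * s * t + (\<eta> - s) * (2 * (1 - t^2)) = 4 * s * (t - 1)"
    unfolding Q_def by (simp_all add: algebra_simps power2_eq_square)
  show "varphi_den \<eta> s (varphi_inv \<eta> s t) \<noteq> 0"
    unfolding inv varphi_divide(2)[OF Q0] den using assms Q0 by simp
  show "varphi \<eta> s (varphi_inv \<eta> s t) = t"
    unfolding inv varphi_divide(1)[OF Q0] num den using assms by simp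
qed

lemma eta_add_mult_eta_diff:
  fixes \<eta> s :: "'a :: comm_ring_1"
  assumes "s^2 = \<eta>^2 - 1"
  shows "(\<eta> + s) * (\<eta> - s) = 1"
  using assms by (simp add: algebra_simps power2_eq_square)

lemma generic_on_H_curve_good_points:
  assumes "s^2 = \<eta>^2 - 1"
  shows "generic_on (H_curve \<eta>)
    (\<lambda>(l, m). l \<noteq> 0 \<and> m \<noteq> 0 \<and> (\<eta> - s) * m \<noteq> 2 \<and> (\<eta> + s) * m \<noteq> 2 \<and> 4 - m^2 \<noteq> 0)"
proof -
  have \<eta>s: "\<eta> + s \<noteq> 0" "\<eta> - s \<noteq> 0"
    using eta_add_mult_eta_diff[OF assms] by auto
  have sq: "4 - m^2 \<noteq> 0" if "m \<noteq> 2" "m \<noteq> -2" for m :: complex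
  proof -
    have "4 - m^2 = (2 - m) * (2 + m)"
      by (simp add: algebra_simps power2_eq_square)
    with that show ?thesis
      by (auto simp: add_eq_0_iff)
  qed
  have "generic_on (H_curve \<eta>) (\<lambda>(l, m). l \<noteq> 0 \<and> m \<notin> {0, 2, -2, 2 / (\<eta> - s), 2 / (\<eta> + s)})"
    by (rule generic_on_H_curve_avoiding) simp
  then show ?thesis
    by (rule generic_on_mono) (use \<eta>s sq in \<open>auto simp: field_simps\<close>)
qed

lemma varphi_is_birational:
  assumes "\<eta>^2 \<noteq> 1" and s_sq: "s^2 = \<eta>^2 - 1"
  shows "varphi_birational \<eta> s"
proof -
  have s0: "s \<noteq> 0"
    using assms by auto
  have \<eta>s: "\<eta> + s \<noteq> 0" "\<eta> - s \<noteq> 0"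
    using eta_add_mult_eta_diff[OF s_sq] by auto
  have "generic_on (H_curve \<eta>) (\<lambda>p. varphi_den \<eta> s p \<noteq> 0 \<and>
      (fst (varphi_inv \<eta> s (varphi \<eta> s p)), snd (varphi_inv \<eta> s (varphi \<eta> s p))) = p)"
    using generic_on_H_curve_good_points[OF s_sq]
  proof (rule generic_on_mono, clarify)
    fix l m
    assume H: "(l, m) \<in> H_curve \<eta>" and "m \<noteq> 0" "(\<eta> - s) * m \<noteq> 2"
    then have "varphi_den \<eta> s (l, m) \<noteq> 0"
      using varphi_den_nonzero s_sq s0 by blast
    with varphi_inv_varphi[OF H s_sq assms(1) s0 \<open>m \<noteq> 0\<close>]
    show "varphi_den \<eta> s (l, m) \<noteq> 0 \<and>
        (fst (varphi_inv \<eta> s (varphi \<eta> s (l, m))), snd (varphi_inv \<eta> s (varphi \<eta> s (l, m)))) = (l, m)"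
      by simp
  qed
  moreover have "generic_on UNIV (\<lambda>t. varphi_inv \<eta> s t \<in> H_curve \<eta> \<and>
      varphi_den \<eta> s (varphi_inv \<eta> s t) \<noteq> 0 \<and> varphi \<eta> s (varphi_inv \<eta> s t) = t)"
  proof (rule generic_onI[of "insert 1 {t. t^2 = (\<eta> + s) / (\<eta> - s)}"])
    fix t :: complex
    assume "t \<notin> insert 1 {t. t^2 = (\<eta> + s) / (\<eta> - s)}"
    then have "t \<noteq> 1" and "(\<eta> + s) - (\<eta> - s) * t^2 \<noteq> 0"
      using \<eta>s by (auto simp: field_simps)
    then show "varphi_inv \<eta> s t \<in> H_curve \<eta> \<and>
        varphi_den \<eta> s (varphi_inv \<eta> s t) \<noteq> 0 \<and> varphi \<eta> s (varphi_inv \<eta> s t) = t"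
      using varphi_varphi_inv[OF s_sq s0] by blast
  qed (simp add: finite_nth_roots)
  ultimately show ?thesis
    unfolding varphi_birational_def using rational_fun_varphi_inv[OF \<eta>s(1)] by fastforce
qed

lemma generic_on_varphi_F_map_psi_fun:
  assumes s_sq: "s^2 = \<eta>^2 - 1" and "s \<noteq> 0"
  shows "generic_on (H_curve \<eta>)
    (\<lambda>p. varphi \<eta> s (F_map p) = (varphi \<eta> s p)^2 \<and>
         psi_fun p = (1/2) * (varphi \<eta> s p + inverse (varphi \<eta> s p)))"
  using generic_on_H_curve_good_points[OF s_sq]
proof (rule generic_on_mono, clarify)
  fix l m
  assume H: "(l, m) \<in> H_curve \<eta>" and "l \<noteq> 0" "m \<noteq> 0" "(\<eta> - s) * m \<noteq> 2" "(\<eta> + s) * m \<noteq> 2"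
    and D: "4 - m^2 \<noteq> 0"
  then have Y0: "varphi_den \<eta> s (l, m) \<noteq> 0" and X0: "varphi_num \<eta> s (l, m) \<noteq> 0"
    using varphi_den_nonzero varphi_num_nonzero s_sq assms(2) by auto
  show "varphi \<eta> s (F_map (l, m)) = (varphi \<eta> s (l, m))^2 \<and>
      psi_fun (l, m) = (1/2) * (varphi \<eta> s (l, m) + inverse (varphi \<eta> s (l, m)))"
    using varphi_F_map[OF H s_sq assms(2) \<open>m \<noteq> 0\<close> D Y0] psi_fun_eq[OF H s_sq \<open>l \<noteq> 0\<close> X0 Y0]
    by simp
qed

theorem lemma5p7:
  fixes \<eta> s :: complex
  assumes "\<eta>^2 \<noteq> 1" and "s^2 = \<eta>^2 - 1"
  shows "varphi_birational \<eta> s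
    \<and> (\<forall>p \<in> H_curve \<eta>. F_den p \<noteq> 0 \<longrightarrow> F_map p \<in> H_curve \<eta>)
    \<and> generic_on (H_curve \<eta>)
        (\<lambda>p. varphi \<eta> s (F_map p) = (varphi \<eta> s p)^2 \<and>
             psi_fun p = (1/2) * (varphi \<eta> s p + inverse (varphi \<eta> s p)))"
proof -
  have "s \<noteq> 0"
    using assms by auto
  then show ?thesis
    using varphi_is_birational[OF assms] F_map_in_H_curve generic_on_varphi_F_map_psi_fun[OF assms(2)]
    by blast
qed

end
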